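(* Assume conditions (i), (ii), (iv), (v) of Assumption A. Then \[ \lim_{h\to0}h^{2\alpha}L^2(h^{-1})\int_{\mathbb{R}}K_n^2(x)\,dx=\frac{1}{2\pi B^2}\int_{\mathbb{R}}|t|^{2\alpha}|\varphi_W(t)|^2\,dt. \]
   Context: Model: $\nu=\alpha F$ is the Lévy measure of a compound Poisson subordinator with intensity $\alpha$ and positive jump distribution $F$; $k(x)=\nu((x,\infty))$ for $x\ge0$, $k(x)=0$ for $x<0$; $\varphi(t)=\exp\big(\int_0^\infty(e^{itx}-1)\frac{k(x)}{x}dx\big)$ is the characteristic function of the stationary distribution of the OU process $dX_t=-\lambda X_tdt+dJ_{\lambda t}$; $\varphi_k(u)=\int_0^\infty e^{iux}k(x)dx$. $W$ is a kernel with Fourier transform $\varphi_W(u)=\int e^{iux}W(x)dx$; $h>0$ a bandwidth; $K_n(x)=\frac1{2\pi}\int_{\mathbb{R}}e^{-itx}\frac{\varphi_W(t)}{\varphi(t/h)}dt$. Conditions: (i) $\int_0^\infty(1\vee|x|^{2+\epsilon})k(x)dx<\infty$ for some $\epsilon>0$. (ii) $k(0)=\alpha$ with $2<\alpha<\infty$. (iv) $|\varphi_k(u)|\lesssim(1+|u|)^{-1}$, $|\varphi_k'(u)|\vee|\varphi_k''(u)|\lesssim(1+|u|)^{-2}$. (v) $W$ integrable, $\int W=1$, $\int|x|^{p+1}|W|<\infty$, $\int x^\ell W(x)dx=0$ for $\ell=1,\dots,p$ (for some integer $p\ge0$), $\varphi_W(u)=0$ for $|u|>1$, $\varphi_W$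 three times continuously differentiable. Slowly varying factor: under (ii) there exist a function $L:(1,\infty)\to[0,\infty)$ slowly varying at $\infty$ and a constant $B>0$ with $\lim_{|t|\to\infty}|t|^\alpha|\varphi(t)|/L(|t|)=B$; $L$ and $B$ denote such a fixed pair. *)

theory Defs
  imports "HOL-Probability.Probability"
begin

text \<open>Tail function k(x) = nu((x,infinity)) of the Levy measure nu = alpha F, and k(x)=0 for x<0.\<close>
definition kfun :: "real \<Rightarrow> real measure \<Rightarrow> real \<Rightarrow> real" where
  "kfun \<alpha> F x = (if x \<ge> 0 then \<alpha> * measure F {x<..} else 0)"

definition ou_cf :: "real \<Rightarrow> real measure \<Rightarrow> real \<Rightarrow> complex" where
  "ou_cf \<alpha> F t = exp (LINT x:{0<..}|lborel.
      (exp (\<i> * complex_of_real (t * x)) - 1) * complex_of_real (kfun \<alpha> F x / x))"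

definition phik :: "real \<Rightarrow> real measure \<Rightarrow> real \<Rightarrow> complex" where
  "phik \<alpha> F u = (LINT x:{0<..}|lborel. exp (\<i> * complex_of_real (u * x)) * complex_of_real (kfun \<alpha> F x))"

definition ft :: "(real \<Rightarrow> real) \<Rightarrow> real \<Rightarrow> complex" where
  "ft W u = (LINT x|lborel. exp (\<i> * complex_of_real (u * x)) * complex_of_real (W x))"

definition Kn :: "real \<Rightarrow> real measure \<Rightarrow> (real \<Rightarrow> real) \<Rightarrow> real \<Rightarrow> real \<Rightarrow> complex" where
  "Kn \<alpha> F W h x = complex_of_real (1 / (2 * pi)) *
     (LINT t|lborel. exp (- (\<i> * complex_of_real (t * x))) * ft W t / ou_cf \<alpha> F (t / h))"

definition slowly_varying :: "(real \<Rightarrow> real) \<Rightarrow> bool" where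
  "slowly_varying L \<longleftrightarrow> (\<forall>c>0. ((\<lambda>x. L (c * x) / L x) \<longlongrightarrow> 1) at_top)"

end

theory Submission
  imports Defs
begin

text \<open>
  \<open>K\<^sub>n\<close> is \<open>1/(2\<pi>)\<close> times the Fourier transform of \<open>g(t) = \<phi>\<^sub>W(t) / \<phi>(t/h)\<close>, a continuous
  function supported in \<open>[-1, 1]\<close> with \<open>g(-t) = cnj (g t)\<close>.  Hence \<open>K\<^sub>n\<close> is real and Plancherel's
  identity gives \<open>\<integral> K\<^sub>n\<^sup>2 = 1/(2\<pi>) \<integral> |\<phi>\<^sub>W(t)|\<^sup>2 / |\<phi>(t/h)|\<^sup>2 dt\<close>.  Plancherel's identity
  is obtained by Gaussian damping: in space the damped integrals increase to \<open>\<integral> |K|\<^sup>2\<close> (monotone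
  convergence), in frequency they are integrals of \<open>g\<close> against Gaussian mollifications of
  \<open>cnj g\<close> (dominated convergence).

  The modulus \<open>|\<phi>(u)| = exp (\<integral>\<^sub>0\<^sup>\<infinity> (cos (u x) - 1) k(x)/x dx)\<close> is non-increasing in \<open>|u|\<close>,
  because \<open>k\<close> is non-increasing (substitute \<open>x = v/u\<close>).  With \<open>y = 1/h\<close>, regular variation
  gives \<open>y^(-2\<alpha>) L(y)\<^sup>2 / |\<phi>(t y)|\<^sup>2 \<longrightarrow> |t|^(2\<alpha>) / B\<^sup>2\<close> for \<open>t \<noteq> 0\<close>, and the monotonicity of \<open>|\<phi>|\<close>
  bounds these ratios by \<open>(2/B)\<^sup>2\<close> uniformly in \<open>|t| \<le> 1\<close> once \<open>y\<close> is large, so dominated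
  convergence concludes.
\<close>

section \<open>Fourier transforms and Plancherel's identity\<close>

lemma iexp_measurable [measurable]: "iexp \<in> borel_measurable borel"
  by (intro borel_measurable_continuous_onI continuous_intros)

lemma cnj_measurable [measurable]: "cnj \<in> borel_measurable borel"
  by (intro borel_measurable_continuous_onI continuous_intros)

lemma lborel_integral_swap_product_bound:
  fixes f :: "real \<Rightarrow> real \<Rightarrow> complex" and a b :: "real \<Rightarrow> real"
  assumes [measurable]: "(\<lambda>(x, y). f x y) \<in> borel_measurable (lborel \<Otimes>\<^sub>M lborel)"
    and bound: "\<And>x y. cmod (f x y) \<le> a x * b y"
    and a: "integrable lborel a" and b: "integrable lborel b"
    and a_nonneg: "\<And>x. 0 \<le> a x" and b_nonneg: "\<And>y. 0 \<le> b y"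
  shows "(LINT x|lborel. LINT y|lborel. f x y) = (LINT y|lborel. LINT x|lborel. f x y)"
proof -
  have [measurable]: "a \<in> borel_measurable borel" "b \<in> borel_measurable borel"
    using a b by auto
  have "integrable (lborel \<Otimes>\<^sub>M lborel) (\<lambda>(x, y). a x * b y)"
    by (rule lborel_pair.Fubini_integrable)
       (use a b a_nonneg b_nonneg in \<open>simp_all add: abs_mult integrable_mult_left\<close>)
  then have "integrable (lborel \<Otimes>\<^sub>M lborel) (\<lambda>(x, y). f x y)"
    by (rule Bochner_Integration.integrable_bound)
       (use bound a_nonneg b_nonneg in \<open>auto simp: abs_mult\<close>)
  then have "integrable (lborel \<Otimes>\<^sub>M lborel) (\<lambda>(y, x). f x y)"
    by (subst (asm) lborel_pair.integrable_product_swap_iff[symmetric]) simp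
  from lborel_pair.Fubini_integral[OF this] show ?thesis by simp
qed

lemma integrable_gaussian_weight:
  fixes n :: real
  assumes "0 < n"
  shows "integrable lborel (\<lambda>x. exp (-((x/n)^2)/2))"
proof -
  have "(\<lambda>x. exp (-((x/n)^2)/2)) = (\<lambda>x. sqrt (2*pi*n^2) * normal_density 0 n x)"
    using assms unfolding normal_density_def by (simp add: power_divide mult_ac)
  then show ?thesis
    using integrable_normal_density[OF assms] by simp
qed

lemma integral_gaussian_iexp:
  assumes n: "0 < n"
  shows "(LINT x|lborel. complex_of_real (exp (-((x/n)^2)/2)) * iexp (w*x))
        = complex_of_real (n * sqrt (2*pi) * exp (-((w*n)^2)/2))"
proof -
  have std: "(LINT x|lborel. complex_of_real (std_normal_density x) * iexp (t*x))
             = complex_of_real (exp (-(t^2)/2))" for t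
  proof -
    have "char std_normal_distribution t
          = (LINT x|lborel. complex_of_real (std_normal_density x) * iexp (t*x))"
      unfolding char_def by (subst integral_density) (auto simp: scaleR_conv_of_real)
    then show ?thesis by (simp add: char_std_normal_distribution)
  qed
  have "(LINT x|lborel. complex_of_real (exp (-((x/n)^2)/2)) * iexp (w*x))
     = \<bar>n\<bar> *\<^sub>R (LINT y|lborel. complex_of_real (exp (-(((0 + n*y)/n)^2)/2)) * iexp (w*(0 + n*y)))"
    by (rule lborel_integral_real_affine) (use n in auto)
  also have "(\<lambda>y. complex_of_real (exp (-(((0 + n*y)/n)^2)/2)) * iexp (w*(0 + n*y)))
      = (\<lambda>y. complex_of_real (sqrt (2*pi)) * (complex_of_real (std_normal_density y) * iexp ((w*n)*y)))"
    using n by (auto simp: std_normal_density_def mult_ac)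
  finally show ?thesis
    using n by (simp only: integral_mult_right_zero std) (simp add: scaleR_conv_of_real mult_ac)
qed

definition fourier :: "(real \<Rightarrow> complex) \<Rightarrow> real \<Rightarrow> complex" where
  "fourier g x = (LINT t|lborel. iexp (-(t*x)) * g t)"

definition gaussian_smoothing :: "(real \<Rightarrow> complex) \<Rightarrow> real \<Rightarrow> real \<Rightarrow> complex" where
  "gaussian_smoothing g n s = (LINT y|lborel. complex_of_real (std_normal_density y) * g (s + y / n))"

lemma fourier_measurable [measurable]:
  assumes [measurable]: "g \<in> borel_measurable borel"
  shows "fourier g \<in> borel_measurable borel"
  unfolding fourier_def by measurable

lemma norm_fourier_le: "cmod (fourier g x) \<le> (LINT t|lborel. cmod (g t))"
  unfolding fourier_def
  using integral_norm_bound[of lborel "\<lambda>t. iexp (-(t*x)) * g t"] by (simp add: norm_mult)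

lemma cnj_fourier: "cnj (fourier g x) = (LINT t|lborel. iexp (t*x) * cnj (g t))"
proof -
  have "cnj (fourier g x) = (LINT t|lborel. cnj (iexp (-(t*x)) * g t))"
    unfolding fourier_def by (rule Bochner_Integration.integral_cnj[symmetric])
  also have "\<dots> = (LINT t|lborel. iexp (t*x) * cnj (g t))"
    by (rule Bochner_Integration.integral_cong) (simp_all add: exp_cnj)
  finally show ?thesis .
qed

lemma cnj_fourier_eq_self:
  assumes "\<And>t. g (-t) = cnj (g t)"
  shows "cnj (fourier g x) = fourier g x"
proof -
  have "cnj (fourier g x) = (LINT t|lborel. iexp (t*x) * g (-t))"
    by (simp add: cnj_fourier assms)
  also have "\<dots> = \<bar>-1\<bar> *\<^sub>R (LINT u|lborel. iexp ((0 + (-1) * u)*x) * g (-(0 + (-1) * u)))"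
    by (rule lborel_integral_real_affine) simp
  finally show ?thesis by (simp add: fourier_def)
qed

lemma power2_eq_of_real_norm_power2:
  assumes "cnj z = z"
  shows "z\<^sup>2 = complex_of_real ((cmod z)\<^sup>2)"
proof -
  have "z\<^sup>2 = z * cnj z"
    using assms by (simp add: power2_eq_square)
  then show ?thesis
    by (simp only: complex_norm_square)
qed

lemma integral_gaussian_conv_eq_smoothing:
  assumes n: "0 < n"
  shows "(LINT t|lborel. g t * complex_of_real (n * sqrt (2*pi) * exp (-(((t-s)*n)^2)/2)))
       = 2*pi * gaussian_smoothing g n s"
proof -
  have "(LINT t|lborel. g t * complex_of_real (n * sqrt (2*pi) * exp (-(((t-s)*n)^2)/2)))
     = \<bar>1/n\<bar> *\<^sub>R (LINT y|lborel. g (s + (1/n) * y)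
          * complex_of_real (n * sqrt (2*pi) * exp (-((((s + (1/n) * y) - s)*n)^2)/2)))"
    by (rule lborel_integral_real_affine) (use n in auto)
  also have "(\<lambda>y. g (s + (1/n) * y)
          * complex_of_real (n * sqrt (2*pi) * exp (-((((s + (1/n) * y) - s)*n)^2)/2)))
     = (\<lambda>y. complex_of_real (n * (2*pi)) * (complex_of_real (std_normal_density y) * g (s + y / n)))"
  proof
    fix y
    have "sqrt (2*pi) * exp (-((((s + (1/n) * y) - s)*n)^2)/2) = 2*pi * std_normal_density y"
      using n by (simp add: std_normal_density_def field_simps real_sqrt_mult[symmetric])
    then show "g (s + (1/n) * y) * complex_of_real (n * sqrt (2*pi) * exp (-((((s + (1/n) * y) - s)*n)^2)/2))
       = complex_of_real (n * (2*pi)) * (complex_of_real (std_normal_density y) * g (s + y / n))"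
      by (simp add: mult_ac flip: of_real_mult)
  qed
  finally show ?thesis
    using n by (simp add: scaleR_conv_of_real gaussian_smoothing_def)
qed

lemma integral_gaussian_iexp_cnj_fourier:
  fixes g :: "real \<Rightarrow> complex"
  assumes [measurable]: "g \<in> borel_measurable borel" and g: "integrable lborel g" and n: "0 < n"
  shows "(LINT x|lborel. complex_of_real (exp (-((x/n)^2)/2)) * iexp (-(s*x)) * cnj (fourier g x))
       = 2*pi * gaussian_smoothing (\<lambda>t. cnj (g t)) n s"
proof -
  define \<psi> where "\<psi> x = exp (-((x/n)^2)/2)" for x
  have \<psi>_integrable: "integrable lborel \<psi>"
    unfolding \<psi>_def using n by (rule integrable_gaussian_weight)
  have "(LINT x|lborel. complex_of_real (\<psi> x) * iexp (-(s*x)) * cnj (fourier g x))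
      = (LINT x|lborel. LINT t|lborel. complex_of_real (\<psi> x) * iexp ((t - s)*x) * cnj (g t))"
  proof (rule Bochner_Integration.integral_cong [OF refl])
    fix x
    have "complex_of_real (\<psi> x) * iexp (-(s*x)) * cnj (fourier g x)
        = (LINT t|lborel. (complex_of_real (\<psi> x) * iexp (-(s*x))) * (iexp (t*x) * cnj (g t)))"
      by (simp add: cnj_fourier)
    also have "\<dots> = (LINT t|lborel. complex_of_real (\<psi> x) * iexp ((t - s)*x) * cnj (g t))"
      by (intro Bochner_Integration.integral_cong refl)
         (simp add: mult_ac exp_add[symmetric] algebra_simps)
    finally show "complex_of_real (\<psi> x) * iexp (-(s*x)) * cnj (fourier g x)
        = (LINT t|lborel. complex_of_real (\<psi> x) * iexp ((t - s)*x) * cnj (g t))" .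
  qed
  also have "\<dots> = (LINT t|lborel. LINT x|lborel. complex_of_real (\<psi> x) * iexp ((t - s)*x) * cnj (g t))"
    by (rule lborel_integral_swap_product_bound[where a=\<psi> and b="\<lambda>t. cmod (g t)"])
       (use \<psi>_integrable g in \<open>auto simp: \<psi>_def norm_mult\<close>)
  also have "\<dots> = (LINT t|lborel. cnj (g t) * complex_of_real (n * sqrt (2*pi) * exp (-(((t-s)*n)^2)/2)))"
  proof (rule Bochner_Integration.integral_cong [OF refl])
    fix t
    have "(LINT x|lborel. complex_of_real (\<psi> x) * iexp ((t - s)*x) * cnj (g t))
       = cnj (g t) * (LINT x|lborel. complex_of_real (exp (-((x/n)^2)/2)) * iexp ((t - s)*x))"
      by (simp flip: integral_mult_right_zero add: mult_ac \<psi>_def)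
    then show "(LINT x|lborel. complex_of_real (\<psi> x) * iexp ((t - s)*x) * cnj (g t))
       = cnj (g t) * complex_of_real (n * sqrt (2*pi) * exp (-(((t-s)*n)^2)/2))"
      by (simp only: integral_gaussian_iexp[OF n])
  qed
  also have "\<dots> = 2*pi * gaussian_smoothing (\<lambda>t. cnj (g t)) n s"
    by (rule integral_gaussian_conv_eq_smoothing[OF n])
  finally show ?thesis unfolding \<psi>_def .
qed

lemma integral_gaussian_weighted_norm_fourier:
  fixes g :: "real \<Rightarrow> complex"
  assumes g_meas [measurable]: "g \<in> borel_measurable borel" and g: "integrable lborel g" and n: "0 < n"
  shows "complex_of_real (LINT x|lborel. exp (-((x/n)^2)/2) * (cmod (fourier g x))\<^sup>2)
       = 2*pi * (LINT s|lborel. g s * gaussian_smoothing (\<lambda>t. cnj (g t)) n s)"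
proof -
  define \<psi> where "\<psi> x = exp (-((x/n)^2)/2)" for x
  define C where "C = (LINT t|lborel. cmod (g t))"
  have fourier_le: "cmod (fourier g x) \<le> C" for x
    unfolding C_def by (rule norm_fourier_le)
  have C_nonneg: "0 \<le> C"
    using fourier_le[of 0] norm_ge_zero order_trans by blast
  have \<psi>_integrable: "integrable lborel \<psi>"
    unfolding \<psi>_def using n by (rule integrable_gaussian_weight)
  have "complex_of_real (LINT x|lborel. \<psi> x * (cmod (fourier g x))\<^sup>2)
      = (LINT x|lborel. LINT s|lborel. (complex_of_real (\<psi> x) * cnj (fourier g x)) * (iexp (-(s*x)) * g s))"
    unfolding integral_complex_of_real[symmetric]
  proof (rule Bochner_Integration.integral_cong [OF refl])
    fix x
    show "complex_of_real (\<psi> x * (cmod (fourier g x))\<^sup>2)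
      = (LINT s|lborel. (complex_of_real (\<psi> x) * cnj (fourier g x)) * (iexp (-(s*x)) * g s))"
    proof -
      have "complex_of_real (\<psi> x * (cmod (fourier g x))\<^sup>2)
          = (complex_of_real (\<psi> x) * cnj (fourier g x)) * fourier g x"
        by (simp only: of_real_mult complex_norm_square mult_ac)
      then show ?thesis
        by (simp only: fourier_def integral_mult_right_zero)
    qed
  qed
  also have "\<dots> = (LINT s|lborel. LINT x|lborel. (complex_of_real (\<psi> x) * cnj (fourier g x)) * (iexp (-(s*x)) * g s))"
  proof (rule lborel_integral_swap_product_bound[where a="\<lambda>x. \<psi> x * C" and b="\<lambda>s. cmod (g s)"])
    show "(\<lambda>(x, s). (complex_of_real (\<psi> x) * cnj (fourier g x)) * (iexp (-(s*x)) * g s))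
          \<in> borel_measurable (lborel \<Otimes>\<^sub>M lborel)"
      unfolding \<psi>_def by measurable
    show "cmod ((complex_of_real (\<psi> x) * cnj (fourier g x)) * (iexp (-(s*x)) * g s))
          \<le> \<psi> x * C * cmod (g s)" for x s
      using fourier_le[of x] by (simp add: \<psi>_def norm_mult mult_right_mono)
    show "integrable lborel (\<lambda>x. \<psi> x * C)"
      using \<psi>_integrable by simp
    show "0 \<le> \<psi> x * C" for x
      using C_nonneg by (simp add: \<psi>_def)
  qed (use g in auto)
  also have "\<dots> = (LINT s|lborel. 2*pi * (g s * gaussian_smoothing (\<lambda>t. cnj (g t)) n s))"
  proof (rule Bochner_Integration.integral_cong [OF refl])
    fix s
    have "(LINT x|lborel. (complex_of_real (\<psi> x) * cnj (fourier g x)) * (iexp (-(s*x)) * g s))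
        = g s * (LINT x|lborel. complex_of_real (\<psi> x) * iexp (-(s*x)) * cnj (fourier g x))"
      by (simp flip: integral_mult_right_zero add: mult_ac)
    then show "(LINT x|lborel. (complex_of_real (\<psi> x) * cnj (fourier g x)) * (iexp (-(s*x)) * g s))
        = 2*pi * (g s * gaussian_smoothing (\<lambda>t. cnj (g t)) n s)"
      unfolding \<psi>_def integral_gaussian_iexp_cnj_fourier[OF g_meas g n] by (simp add: mult_ac)
  qed
  also have "\<dots> = 2*pi * (LINT s|lborel. g s * gaussian_smoothing (\<lambda>t. cnj (g t)) n s)"
    by (rule integral_mult_right_zero)
  finally show ?thesis unfolding \<psi>_def .
qed

lemma gaussian_smoothing_measurable [measurable]:
  assumes [measurable]: "g \<in> borel_measurable borel"
  shows "gaussian_smoothing g n \<in> borel_measurable borel"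
  unfolding gaussian_smoothing_def by measurable

lemma norm_gaussian_smoothing_le:
  fixes g :: "real \<Rightarrow> complex"
  assumes [measurable]: "g \<in> borel_measurable borel" and bound: "\<And>t. cmod (g t) \<le> M"
  shows "cmod (gaussian_smoothing g n s) \<le> M"
proof -
  have M: "0 \<le> M"
    using bound[of 0] norm_ge_zero order_trans by blast
  have "integrable lborel (\<lambda>y. complex_of_real (std_normal_density y) * g (s + y / n))"
    by (rule Bochner_Integration.integrable_bound[where f="\<lambda>y. std_normal_density y * M"])
       (use bound M in \<open>auto simp: norm_mult abs_mult intro!: mult_left_mono\<close>)
  then have "cmod (gaussian_smoothing g n s) \<le> (LINT y|lborel. std_normal_density y * M)"
    unfolding gaussian_smoothing_def
    by (rule Bochner_Integration.integral_norm_bound_integral)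
       (use bound M in \<open>auto simp: norm_mult abs_mult intro!: mult_left_mono\<close>)
  then show ?thesis by simp
qed

lemma gaussian_smoothing_tendsto:
  fixes g :: "real \<Rightarrow> complex"
  assumes g: "continuous_on UNIV g" and bound: "\<And>t. cmod (g t) \<le> M"
  shows "(\<lambda>m. gaussian_smoothing g (Suc m) s) \<longlonglongrightarrow> g s"
proof -
  have [measurable]: "g \<in> borel_measurable borel"
    using g by (rule borel_measurable_continuous_onI)
  have M: "0 \<le> M"
    using bound[of 0] norm_ge_zero order_trans by blast
  have "(\<lambda>m. gaussian_smoothing g (Suc m) s)
        \<longlonglongrightarrow> (LINT y|lborel. complex_of_real (std_normal_density y) * g s)"
    unfolding gaussian_smoothing_def
  proof (rule integral_dominated_convergence[where w="\<lambda>y. std_normal_density y * M"])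
    show "AE y in lborel. (\<lambda>m. complex_of_real (std_normal_density y) * g (s + y / real (Suc m)))
            \<longlonglongrightarrow> complex_of_real (std_normal_density y) * g s"
    proof (intro AE_I2 tendsto_intros)
      fix y
      have "(\<lambda>m. s + y * inverse (real (Suc m))) \<longlonglongrightarrow> s + y * 0"
        using LIMSEQ_inverse_real_of_nat by (intro tendsto_add tendsto_const tendsto_mult_left)
      then show "(\<lambda>m. g (s + y / real (Suc m))) \<longlonglongrightarrow> g s"
        using g by (intro isCont_tendsto_compose[where g=g])
                   (auto simp: continuous_on_eq_continuous_at divide_inverse)
    qed
  qed (use bound M in \<open>auto simp: norm_mult abs_mult intro!: mult_left_mono\<close>)
  then show ?thesis by simp
qed

lemma tendsto_integral_gaussian_weighted_norm_fourier:
  fixes g :: "real \<Rightarrow> complex"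
  assumes g_cont: "continuous_on UNIV g" and g: "integrable lborel g"
    and bound: "\<And>t. cmod (g t) \<le> M"
  shows "(\<lambda>m. LINT x|lborel. exp (-((x / real (Suc m))^2)/2) * (cmod (fourier g x))\<^sup>2)
         \<longlonglongrightarrow> 2*pi * (LINT t|lborel. (cmod (g t))\<^sup>2)"
proof -
  have g_meas [measurable]: "g \<in> borel_measurable borel"
    using g_cont by (rule borel_measurable_continuous_onI)
  have cnj_g_cont: "continuous_on UNIV (\<lambda>t. cnj (g t))"
    using g_cont by (intro continuous_intros)
  have smoothing_le: "cmod (gaussian_smoothing (\<lambda>t. cnj (g t)) n s) \<le> M" for n s
    by (rule norm_gaussian_smoothing_le) (simp_all add: bound)
  have smoothing_tendsto: "(\<lambda>m. gaussian_smoothing (\<lambda>t. cnj (g t)) (Suc m) s) \<longlonglongrightarrow> cnj (g s)" for s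
    by (rule gaussian_smoothing_tendsto[OF cnj_g_cont, where M=M]) (simp add: bound)
  have "(\<lambda>m. LINT s|lborel. g s * gaussian_smoothing (\<lambda>t. cnj (g t)) (Suc m) s)
        \<longlonglongrightarrow> (LINT s|lborel. g s * cnj (g s))"
  proof (rule integral_dominated_convergence[where w="\<lambda>s. cmod (g s) * M"])
    show "AE s in lborel. (\<lambda>m. g s * gaussian_smoothing (\<lambda>t. cnj (g t)) (Suc m) s)
            \<longlonglongrightarrow> g s * cnj (g s)"
      by (intro AE_I2 tendsto_mult_left smoothing_tendsto)
    show "AE s in lborel. cmod (g s * gaussian_smoothing (\<lambda>t. cnj (g t)) (Suc m) s) \<le> cmod (g s) * M"
      for m
      unfolding norm_mult by (intro AE_I2 mult_left_mono smoothing_le norm_ge_zero)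
    show "(\<lambda>s. g s * gaussian_smoothing (\<lambda>t. cnj (g t)) (Suc m) s) \<in> borel_measurable lborel" for m
      by measurable
  qed (use g in auto)
  then have "(\<lambda>m. 2*pi * (LINT s|lborel. g s * gaussian_smoothing (\<lambda>t. cnj (g t)) (Suc m) s))
        \<longlonglongrightarrow> 2*pi * complex_of_real (LINT t|lborel. (cmod (g t))\<^sup>2)"
    unfolding complex_norm_square integral_complex_of_real[symmetric] by (rule tendsto_mult_left)
  moreover have "complex_of_real (LINT x|lborel. exp (-((x / real (Suc m))^2)/2) * (cmod (fourier g x))\<^sup>2)
        = 2*pi * (LINT s|lborel. g s * gaussian_smoothing (\<lambda>t. cnj (g t)) (Suc m) s)" for m
    by (rule integral_gaussian_weighted_norm_fourier[OF g_meas g]) simp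
  ultimately have "(\<lambda>m. complex_of_real (LINT x|lborel. exp (-((x / real (Suc m))^2)/2) * (cmod (fourier g x))\<^sup>2))
        \<longlonglongrightarrow> complex_of_real (2*pi * (LINT t|lborel. (cmod (g t))\<^sup>2))"
    unfolding of_real_mult of_real_numeral by (simp only:)
  then show ?thesis
    unfolding tendsto_of_real_iff .
qed

theorem plancherel:
  fixes g :: "real \<Rightarrow> complex"
  assumes g_cont: "continuous_on UNIV g" and g: "integrable lborel g"
    and bound: "\<And>t. cmod (g t) \<le> M"
  shows "(LINT x|lborel. (cmod (fourier g x))\<^sup>2) = 2*pi * (LINT t|lborel. (cmod (g t))\<^sup>2)"
proof -
  have [measurable]: "g \<in> borel_measurable borel"
    using g_cont by (rule borel_measurable_continuous_onI)
  define f where "f m x = exp (-((x / real (Suc m))^2)/2) * (cmod (fourier g x))\<^sup>2" for m x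
  have f_integrable: "integrable lborel (f m)" for m
  proof (rule Bochner_Integration.integrable_bound)
    show "integrable lborel (\<lambda>x. exp (-((x / real (Suc m))^2)/2) * (LINT t|lborel. cmod (g t))\<^sup>2)"
      using integrable_gaussian_weight[of "real (Suc m)"] by simp
    show "AE x in lborel. norm (f m x) \<le> norm (exp (-((x / real (Suc m))^2)/2) * (LINT t|lborel. cmod (g t))\<^sup>2)"
      using norm_fourier_le[of g] unfolding f_def
      by (intro AE_I2) (simp add: mult_left_mono power_mono)
  qed (unfold f_def, measurable)
  have f_mono: "AE x in lborel. mono (\<lambda>m. f m x)"
  proof (intro AE_I2 monoI)
    fix x and m k :: nat
    assume "m \<le> k"
    then have "(x / real (Suc k))^2 \<le> (x / real (Suc m))^2"
      by (simp add: power_divide frac_le)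
    then show "f m x \<le> f k x"
      unfolding f_def by (intro mult_right_mono) auto
  qed
  have f_nonneg: "AE x in lborel. 0 \<le> f m x" for m
    by (simp add: f_def)
  have f_tendsto: "AE x in lborel. (\<lambda>m. f m x) \<longlonglongrightarrow> (cmod (fourier g x))\<^sup>2"
  proof (intro AE_I2)
    fix x
    have "(\<lambda>m. x * inverse (real (Suc m))) \<longlonglongrightarrow> x * 0"
      using LIMSEQ_inverse_real_of_nat by (rule tendsto_mult_left)
    then have "(\<lambda>m. exp (-((x * inverse (real (Suc m)))^2)/2)) \<longlonglongrightarrow> exp (-((x * 0)^2)/2)"
      by (intro tendsto_exp tendsto_divide tendsto_minus tendsto_power tendsto_const) simp_all
    then show "(\<lambda>m. f m x) \<longlonglongrightarrow> (cmod (fourier g x))\<^sup>2"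
      unfolding f_def divide_inverse using tendsto_mult_right by fastforce
  qed
  have "(\<lambda>x. (cmod (fourier g x))\<^sup>2) \<in> borel_measurable lborel"
    by measurable
  with tendsto_integral_gaussian_weighted_norm_fourier[OF g_cont g bound] show ?thesis
    unfolding f_def[symmetric]
    by (rule integral_monotone_convergence_nonneg(2)[OF f_integrable f_mono f_nonneg f_tendsto])
qed

section \<open>The stationary characteristic function of the Ornstein-Uhlenbeck process\<close>

lemma measure_greaterThan_antimono:
  fixes F :: "real measure"
  assumes "prob_space F" and "sets F = sets borel" and "a \<le> b"
  shows "measure F {b<..} \<le> measure F {a<..}"
proof -
  interpret prob_space F by fact
  show ?thesis by (rule finite_measure_mono) (use assms in auto)
qed

lemma kfun_measurable:
  assumes F: "prob_space F" and sets_F: "sets F = sets borel"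
  shows "kfun \<alpha> F \<in> borel_measurable borel"
proof -
  have "mono (\<lambda>x. - measure F {x<..})"
    using measure_greaterThan_antimono[OF F sets_F]
    by (auto intro: monoI)
  then have [measurable]: "(\<lambda>x. - measure F {x<..}) \<in> borel_measurable borel"
    by (rule borel_measurable_mono)
  have "kfun \<alpha> F = (\<lambda>x. indicator {0..} x * (\<alpha> * - (- measure F {x<..})))"
    by (auto simp: kfun_def fun_eq_iff)
  also have "\<dots> \<in> borel_measurable borel" by measurable
  finally show ?thesis .
qed

lemma set_integrable_kfun:
  assumes F: "prob_space F" "sets F = sets borel" and pos: "0 < \<alpha>"
    and weighted: "set_integrable lborel {0<..} (\<lambda>x. max 1 (\<bar>x\<bar> powr p) * kfun \<alpha> F x)"
  shows "set_integrable lborel {0<..} (kfun \<alpha> F)"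
proof (rule set_integrable_bound[OF weighted])
  have [measurable]: "kfun \<alpha> F \<in> borel_measurable borel"
    using F by (rule kfun_measurable)
  show "set_borel_measurable lborel {0<..} (kfun \<alpha> F)"
    unfolding set_borel_measurable_def by measurable
  have "norm (kfun \<alpha> F x) \<le> norm (max 1 (\<bar>x\<bar> powr p) * kfun \<alpha> F x)" for x
  proof -
    have k: "0 \<le> kfun \<alpha> F x"
      using pos by (simp add: kfun_def)
    then have "kfun \<alpha> F x \<le> max 1 (\<bar>x\<bar> powr p) * kfun \<alpha> F x"
      using mult_right_mono[OF max.cobounded1[of 1 "\<bar>x\<bar> powr p"] k] by simp
    then show ?thesis
      using k by simp
  qed
  then show "AE x in lborel. x \<in> {0<..} \<longrightarrow> norm (kfun \<alpha> F x) \<le> norm (max 1 (\<bar>x\<bar> powr p) * kfun \<alpha> F x)"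
    by (intro AE_I2) blast
qed

definition levy_integrand :: "real \<Rightarrow> real measure \<Rightarrow> real \<Rightarrow> real \<Rightarrow> complex" where
  "levy_integrand \<alpha> F t x = indicator {0<..} x *\<^sub>R ((iexp (t*x) - 1) * complex_of_real (kfun \<alpha> F x / x))"

definition ou_log_modulus :: "real \<Rightarrow> real measure \<Rightarrow> real \<Rightarrow> real" where
  "ou_log_modulus \<alpha> F t = (LINT x|lborel. indicator {0<..} x * ((cos (t*x) - 1) * (kfun \<alpha> F x / x)))"

lemma ou_cf_eq_exp_integral: "ou_cf \<alpha> F t = exp (LINT x|lborel. levy_integrand \<alpha> F t x)"
  by (simp add: ou_cf_def levy_integrand_def set_lebesgue_integral_def)

lemma ou_cf_nonzero: "ou_cf \<alpha> F t \<noteq> 0"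
  by (simp add: ou_cf_def)

lemma norm_iexp_minus_one_le: "cmod (iexp y - 1) \<le> \<bar>y\<bar>"
  using iexp_approx1[of y 0] by simp

lemma norm_iexp_minus_one_le_2: "cmod (iexp y - 1) \<le> 2"
  using norm_triangle_ineq4[of "iexp y" 1] by simp

locale levy_tail =
  fixes \<alpha> :: real and F :: "real measure"
  assumes prob_F: "prob_space F" and sets_F: "sets F = sets borel" and pos: "0 < \<alpha>"
    and tail_integrable: "set_integrable lborel {0<..} (kfun \<alpha> F)"
begin

lemmas [measurable] = kfun_measurable[OF prob_F sets_F]

lemma kfun_nonneg: "0 \<le> kfun \<alpha> F x"
  using pos by (auto simp: kfun_def)

lemma kfun_le: "kfun \<alpha> F x \<le> \<alpha>"
  using pos prob_space.prob_le_1[OF prob_F] by (auto simp: kfun_def intro: mult_left_le)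

lemma kfun_antimono:
  assumes "0 \<le> a" "a \<le> b"
  shows "kfun \<alpha> F b \<le> kfun \<alpha> F a"
  using measure_greaterThan_antimono[OF prob_F sets_F \<open>a \<le> b\<close>]
    assms pos by (auto simp: kfun_def)

lemma levy_integrand_measurable [measurable]: "levy_integrand \<alpha> F t \<in> borel_measurable borel"
  unfolding levy_integrand_def by measurable

lemma norm_levy_integrand_le:
  assumes "\<bar>t\<bar> \<le> T"
  shows "cmod (levy_integrand \<alpha> F t x)
     \<le> T * \<alpha> * indicator {0<..1} x + 2 * (indicator {0<..} x * kfun \<alpha> F x)"
proof (cases "0 < x")
  case False
  then show ?thesis using assms pos by (auto simp: levy_integrand_def indicator_def)
next
  case x: True
  have k: "0 \<le> kfun \<alpha> F x" by (rule kfun_nonneg)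
  have "cmod (levy_integrand \<alpha> F t x) = cmod (iexp (t*x) - 1) * (kfun \<alpha> F x / x)"
    using x k by (simp add: levy_integrand_def norm_mult norm_divide)
  also have "\<dots> \<le> T * \<alpha> * indicator {0<..1} x + 2 * kfun \<alpha> F x"
  proof (cases "x \<le> 1")
    case True
    \<comment> \<open>near the origin the singularity of \<open>k(x)/x\<close> is cancelled by \<open>|e^{itx} - 1| \<le> |t| x\<close>\<close>
    have "cmod (iexp (t*x) - 1) * (kfun \<alpha> F x / x) \<le> (\<bar>t\<bar> * x) * (kfun \<alpha> F x / x)"
      using norm_iexp_minus_one_le[of "t*x"] x k by (intro mult_right_mono) (auto simp: abs_mult)
    also have "\<dots> = \<bar>t\<bar> * kfun \<alpha> F x" using x by simp
    also have "\<dots> \<le> T * \<alpha>" using assms kfun_le[of x] k by (intro mult_mono) auto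
    finally show ?thesis using True x k by (simp add: indicator_def)
  next
    case False
    have "cmod (iexp (t*x) - 1) * (kfun \<alpha> F x / x) \<le> 2 * (kfun \<alpha> F x / x)"
      using norm_iexp_minus_one_le_2[of "t*x"] x k by (intro mult_right_mono) auto
    also have "\<dots> \<le> 2 * kfun \<alpha> F x"
      using False k by (simp add: divide_le_eq mult_le_cancel_left1 mult_right_le_one_le)
    finally show ?thesis using False x assms pos by (simp add: indicator_def)
  qed
  finally show ?thesis using x by simp
qed

lemma integrable_levy_bound:
  "integrable lborel (\<lambda>x. T * \<alpha> * indicator {0<..1} x + 2 * (indicator {0<..} x * kfun \<alpha> F x))"
proof -
  have "integrable lborel (\<lambda>x::real. indicator {0<..1} x :: real)"
    by (simp add: integrable_indicator_iff)
  moreover have "integrable lborel (\<lambda>x. indicator {0<..} x * kfun \<alpha> F x)"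
    using tail_integrable by (simp add: set_integrable_def)
  ultimately show ?thesis by auto
qed

lemma integrable_levy_integrand: "integrable lborel (levy_integrand \<alpha> F t)"
  by (rule Bochner_Integration.integrable_bound[OF integrable_levy_bound[of "\<bar>t\<bar>"]])
     (use norm_levy_integrand_le[of t "\<bar>t\<bar>"] kfun_nonneg pos in
       \<open>auto intro!: AE_I2 simp: levy_integrand_def abs_mult indicator_def\<close>)

lemma isCont_levy_exponent: "isCont (\<lambda>t. LINT x|lborel. levy_integrand \<alpha> F t x) t0"
proof (rule continuous_at_sequentiallyI)
  fix u :: "nat \<Rightarrow> real"
  assume u: "u \<longlonglongrightarrow> t0"
  then obtain T where T: "\<And>n. norm (u n) \<le> T"
    by (metis BseqE convergentI convergent_imp_Bseq)
  show "(\<lambda>n. LINT x|lborel. levy_integrand \<alpha> F (u n) x)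
        \<longlonglongrightarrow> (LINT x|lborel. levy_integrand \<alpha> F t0 x)"
  proof (rule integral_dominated_convergence
      [where w="\<lambda>x. T * \<alpha> * indicator {0<..1} x + 2 * (indicator {0<..} x * kfun \<alpha> F x)"])
    show "AE x in lborel. (\<lambda>n. levy_integrand \<alpha> F (u n) x) \<longlonglongrightarrow> levy_integrand \<alpha> F t0 x"
      unfolding levy_integrand_def by (intro AE_I2 tendsto_intros u)
    show "AE x in lborel. cmod (levy_integrand \<alpha> F (u n) x)
       \<le> T * \<alpha> * indicator {0<..1} x + 2 * (indicator {0<..} x * kfun \<alpha> F x)" for n
      using norm_levy_integrand_le[of "u n" T] T[of n] by auto
  qed (auto simp: levy_integrand_def integrable_levy_bound)
qed

lemma continuous_ou_cf: "continuous_on UNIV (ou_cf \<alpha> F)"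
  unfolding ou_cf_eq_exp_integral[abs_def]
  by (intro continuous_at_imp_continuous_on ballI continuous_intros isCont_levy_exponent)

lemma ou_cf_uminus: "ou_cf \<alpha> F (-t) = cnj (ou_cf \<alpha> F t)"
proof -
  have "cnj (LINT x|lborel. levy_integrand \<alpha> F t x) = (LINT x|lborel. cnj (levy_integrand \<alpha> F t x))"
    by (rule Bochner_Integration.integral_cnj[symmetric])
  also have "\<dots> = (LINT x|lborel. levy_integrand \<alpha> F (-t) x)"
    by (rule Bochner_Integration.integral_cong) (simp_all add: levy_integrand_def exp_cnj)
  finally show ?thesis by (simp add: ou_cf_eq_exp_integral exp_cnj)
qed

lemma norm_ou_cf: "cmod (ou_cf \<alpha> F t) = exp (ou_log_modulus \<alpha> F t)"
proof -
  have "Re (LINT x|lborel. levy_integrand \<alpha> F t x) = (LINT x|lborel. Re (levy_integrand \<alpha> F t x))"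
    by (rule integral_Re[symmetric, OF integrable_levy_integrand])
  also have "\<dots> = ou_log_modulus \<alpha> F t"
    unfolding ou_log_modulus_def
    by (rule Bochner_Integration.integral_cong) (simp_all add: levy_integrand_def Re_exp)
  finally show ?thesis by (simp add: ou_cf_eq_exp_integral)
qed

lemma integrable_ou_log_modulus_integrand:
  "integrable lborel (\<lambda>x. indicator {0<..} x * ((cos (t*x) - 1) * (kfun \<alpha> F x / x)))"
  using integrable_Re[OF integrable_levy_integrand[of t]]
  by (simp add: levy_integrand_def Re_exp)

lemma ou_log_modulus_nonpos: "ou_log_modulus \<alpha> F t \<le> 0"
proof -
  have "0 \<le> (LINT x|lborel. - (indicator {0<..} x * ((cos (t*x) - 1) * (kfun \<alpha> F x / x))))"
    by (rule integral_nonneg_AE)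
       (use kfun_nonneg in \<open>auto intro!: AE_I2 mult_nonpos_nonneg divide_nonpos_pos simp: indicator_def\<close>)
  then show ?thesis unfolding ou_log_modulus_def by simp
qed

lemma ou_log_modulus_rescale:
  assumes t: "0 < t"
  shows "ou_log_modulus \<alpha> F t = (LINT u|lborel. indicator {0<..} u * ((cos u - 1) * (kfun \<alpha> F (u/t) / u)))"
    and "integrable lborel (\<lambda>u. indicator {0<..} u * ((cos u - 1) * (kfun \<alpha> F (u/t) / u)))"
proof -
  define f where "f x = indicator {0<..} x * ((cos (t*x) - 1) * (kfun \<alpha> F x / x))" for x
  have f: "f (0 + (1/t) * u) = t * (indicator {0<..} u * ((cos u - 1) * (kfun \<alpha> F (u/t) / u)))" for u
    using t by (simp add: f_def indicator_def field_simps)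
  have "ou_log_modulus \<alpha> F t = \<bar>1/t\<bar> *\<^sub>R (LINT u|lborel. f (0 + (1/t) * u))"
    unfolding ou_log_modulus_def f_def[symmetric] by (rule lborel_integral_real_affine) (use t in auto)
  also have "\<dots> = (LINT u|lborel. indicator {0<..} u * ((cos u - 1) * (kfun \<alpha> F (u/t) / u)))"
    using t by (simp only: f integral_mult_right_zero) simp
  finally show "ou_log_modulus \<alpha> F t = (LINT u|lborel. indicator {0<..} u * ((cos u - 1) * (kfun \<alpha> F (u/t) / u)))" .
  have "integrable lborel (\<lambda>u. f (0 + (1/t) * u))"
    by (rule lborel_integrable_real_affine)
       (use t integrable_ou_log_modulus_integrand[of t] in \<open>auto simp: f_def\<close>)
  then have "integrable lborel (\<lambda>u. (1/t) * f (0 + (1/t) * u))" by simp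
  then show "integrable lborel (\<lambda>u. indicator {0<..} u * ((cos u - 1) * (kfun \<alpha> F (u/t) / u)))"
    using t by (simp only: f) simp
qed

lemma ou_log_modulus_antimono:
  assumes "0 < t" "t \<le> s"
  shows "ou_log_modulus \<alpha> F s \<le> ou_log_modulus \<alpha> F t"
proof -
  have s: "0 < s" using assms by simp
  show ?thesis
    unfolding ou_log_modulus_rescale(1)[OF assms(1)] ou_log_modulus_rescale(1)[OF s]
  proof (rule integral_mono[OF ou_log_modulus_rescale(2)[OF s] ou_log_modulus_rescale(2)[OF assms(1)]])
    fix u :: real
    show "indicator {0<..} u * ((cos u - 1) * (kfun \<alpha> F (u/s) / u))
        \<le> indicator {0<..} u * ((cos u - 1) * (kfun \<alpha> F (u/t) / u))"
    proof (cases "0 < u")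
      case True
      have "kfun \<alpha> F (u/t) \<le> kfun \<alpha> F (u/s)"
        by (rule kfun_antimono) (use True assms in \<open>auto simp: frac_le\<close>)
      then have "(cos u - 1) * (kfun \<alpha> F (u/s) / u) \<le> (cos u - 1) * (kfun \<alpha> F (u/t) / u)"
        using True by (intro mult_left_mono_neg divide_right_mono) auto
      then show ?thesis using True by simp
    qed simp
  qed
qed

lemma norm_ou_cf_antimono:
  assumes "\<bar>t\<bar> \<le> \<bar>s\<bar>"
  shows "cmod (ou_cf \<alpha> F s) \<le> cmod (ou_cf \<alpha> F t)"
proof -
  have even: "ou_log_modulus \<alpha> F r = ou_log_modulus \<alpha> F \<bar>r\<bar>" for r
    by (simp add: ou_log_modulus_def abs_if)
  have "ou_log_modulus \<alpha> F s \<le> ou_log_modulus \<alpha> F t"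
  proof (cases "t = 0")
    case True
    then show ?thesis using ou_log_modulus_nonpos[of s] by (simp add: ou_log_modulus_def)
  next
    case False
    then show ?thesis
      using assms ou_log_modulus_antimono[of "\<bar>t\<bar>" "\<bar>s\<bar>"] even[of s] even[of t] by simp
  qed
  then show ?thesis by (simp add: norm_ou_cf)
qed

end

section \<open>The deconvolution kernel\<close>

lemma ft_uminus: "ft W (-u) = cnj (ft W u)"
proof -
  have "cnj (ft W u) = (LINT x|lborel. cnj (iexp (u*x) * complex_of_real (W x)))"
    unfolding ft_def by (rule Bochner_Integration.integral_cnj[symmetric])
  also have "\<dots> = ft W (-u)"
    unfolding ft_def by (rule Bochner_Integration.integral_cong) (simp_all add: exp_cnj)
  finally show ?thesis by simp
qed

lemma norm_ft_le: "cmod (ft W u) \<le> (LINT x|lborel. \<bar>W x\<bar>)"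
  unfolding ft_def
  using integral_norm_bound[of lborel "\<lambda>x. iexp (u*x) * complex_of_real (W x)"]
  by (simp add: norm_mult)

lemma norm_ft_square_le_indicator:
  assumes supp: "\<And>u. \<bar>u\<bar> > 1 \<Longrightarrow> ft W u = 0"
  shows "(cmod (ft W t))\<^sup>2 \<le> (LINT x|lborel. \<bar>W x\<bar>)\<^sup>2 * indicator {-1..1} t"
proof (cases "\<bar>t\<bar> \<le> 1")
  case True
  then show ?thesis using norm_ft_le[of W t] by (auto simp: indicator_def intro: power_mono)
qed (use supp in auto)

lemma integrable_norm_ft_square:
  assumes cont: "continuous_on UNIV (ft W)" and supp: "\<And>u. \<bar>u\<bar> > 1 \<Longrightarrow> ft W u = 0"
  shows "integrable lborel (\<lambda>t. (cmod (ft W t))\<^sup>2)"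
proof (rule Bochner_Integration.integrable_bound)
  show "integrable lborel (\<lambda>t. (LINT x|lborel. \<bar>W x\<bar>)\<^sup>2 * indicator {-1..1::real} t)"
    by (simp add: integrable_indicator_iff)
  have [measurable]: "ft W \<in> borel_measurable borel"
    using cont by (rule borel_measurable_continuous_onI)
  show "(\<lambda>t. (cmod (ft W t))\<^sup>2) \<in> borel_measurable lborel"
    by measurable
qed (use norm_ft_square_le_indicator[OF supp] in \<open>auto intro!: AE_I2\<close>)

lemma tendsto_slowly_varying_scaled_inverse:
  fixes \<phi> :: "real \<Rightarrow> complex" and L :: "real \<Rightarrow> real"
  assumes L: "slowly_varying L" and B: "0 < B"
    and lim: "((\<lambda>u. \<bar>u\<bar> powr \<alpha> * cmod (\<phi> u) / L \<bar>u\<bar>) \<longlongrightarrow> B) at_infinity"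
    and nonzero: "\<And>u. \<phi> u \<noteq> 0" and t: "t \<noteq> 0"
  shows "((\<lambda>y. L y / (y powr \<alpha> * cmod (\<phi> (t*y)))) \<longlongrightarrow> \<bar>t\<bar> powr \<alpha> / B) at_top"
proof -
  define Q where "Q u = \<bar>u\<bar> powr \<alpha> * cmod (\<phi> u) / L \<bar>u\<bar>" for u
  have "filterlim (\<lambda>y. t*y) at_infinity at_top"
    unfolding filterlim_at_infinity_conv_norm_at_top using t
    by (simp add: abs_mult) (rule filterlim_tendsto_pos_mult_at_top[OF tendsto_const _ filterlim_abs_real], simp)
  with lim have Q: "((\<lambda>y. Q (t*y)) \<longlongrightarrow> B) at_top"
    unfolding Q_def by (rule filterlim_compose)
  have ratio: "((\<lambda>y. L (\<bar>t\<bar>*y) / L y) \<longlongrightarrow> 1) at_top"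
    using L t unfolding slowly_varying_def by simp
  have "\<forall>\<^sub>F y in at_top. L y / (y powr \<alpha> * cmod (\<phi> (t*y))) = \<bar>t\<bar> powr \<alpha> / (Q (t*y) * (L (\<bar>t\<bar>*y) / L y))"
    using eventually_gt_at_top[of 0] order_tendstoD(1)[OF Q B] order_tendstoD(1)[OF ratio zero_less_one]
  proof eventually_elim
    case (elim y)
    then have "L (\<bar>t\<bar>*y) \<noteq> 0" "L y \<noteq> 0" "0 < y powr \<alpha>" "0 < cmod (\<phi> (t*y))"
      using nonzero by auto
    then show ?case
      using elim t by (simp add: Q_def abs_mult powr_mult field_simps)
  qed
  moreover have "((\<lambda>y. \<bar>t\<bar> powr \<alpha> / (Q (t*y) * (L (\<bar>t\<bar>*y) / L y))) \<longlongrightarrow> \<bar>t\<bar> powr \<alpha> / (B * 1)) at_top"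
    using B by (intro tendsto_divide tendsto_mult Q ratio tendsto_const) simp
  ultimately show ?thesis
    by (simp add: tendsto_cong)
qed

context levy_tail
begin

lemma eventually_scaled_inverse_ou_cf_le:
  fixes L :: "real \<Rightarrow> real"
  assumes L_nonneg: "\<And>x. x > 1 \<Longrightarrow> L x \<ge> 0" and B: "0 < B"
    and lim: "((\<lambda>u. \<bar>u\<bar> powr \<alpha> * cmod (ou_cf \<alpha> F u) / L \<bar>u\<bar>) \<longlongrightarrow> B) at_infinity"
  shows "\<forall>\<^sub>F y in at_top. \<forall>t. \<bar>t\<bar> \<le> 1 \<longrightarrow>
           (L y / (y powr \<alpha> * cmod (ou_cf \<alpha> F (t*y))))\<^sup>2 \<le> (2 / B)\<^sup>2"
proof -
  have "((\<lambda>y. \<bar>y\<bar> powr \<alpha> * cmod (ou_cf \<alpha> F y) / L \<bar>y\<bar>) \<longlongrightarrow> B) at_top"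
    using lim at_top_le_at_infinity by (rule tendsto_mono[rotated])
  then have "\<forall>\<^sub>F y in at_top. B / 2 < \<bar>y\<bar> powr \<alpha> * cmod (ou_cf \<alpha> F y) / L \<bar>y\<bar>"
    using B by (intro order_tendstoD(1)) auto
  with eventually_gt_at_top[of 1] show ?thesis
  proof eventually_elim
    case (elim y)
    show ?case
    proof (intro allI impI)
      fix t :: real
      assume t: "\<bar>t\<bar> \<le> 1"
      have y: "0 < y powr \<alpha>" "0 < cmod (ou_cf \<alpha> F y)" "0 < cmod (ou_cf \<alpha> F (t*y))"
        using elim by (auto simp: ou_cf_nonzero)
      have "L y < 2 / B * (y powr \<alpha> * cmod (ou_cf \<alpha> F y))"
        using elim L_nonneg[of y] B y by (cases "L y = 0") (auto simp: field_simps)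
      also have "\<dots> \<le> 2 / B * (y powr \<alpha> * cmod (ou_cf \<alpha> F (t*y)))"
      proof -
        have "\<bar>t*y\<bar> \<le> \<bar>y\<bar>"
          using t by (simp add: abs_mult mult_left_le_one_le)
        then have le: "cmod (ou_cf \<alpha> F y) \<le> cmod (ou_cf \<alpha> F (t*y))"
          by (rule norm_ou_cf_antimono)
        show ?thesis
          using mult_left_mono[OF mult_left_mono[OF le, of "y powr \<alpha>"], of "2 / B"] B y by simp
      qed
      finally have "L y / (y powr \<alpha> * cmod (ou_cf \<alpha> F (t*y))) \<le> 2 / B"
        using y by (simp add: field_simps)
      moreover have "0 \<le> L y / (y powr \<alpha> * cmod (ou_cf \<alpha> F (t*y)))"
        using elim L_nonneg[of y] by simp
      ultimately show "(L y / (y powr \<alpha> * cmod (ou_cf \<alpha> F (t*y))))\<^sup>2 \<le> (2 / B)\<^sup>2"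
        by (intro power_mono)
    qed
  qed
qed

lemma Kn_eq_fourier:
  "Kn \<alpha> F W h x = complex_of_real (1 / (2*pi)) * fourier (\<lambda>t. ft W t / ou_cf \<alpha> F (t/h)) x"
  unfolding Kn_def fourier_def
  by (intro arg_cong[where f="\<lambda>z. complex_of_real (1 / (2*pi)) * z"] Bochner_Integration.integral_cong) simp_all

lemma integral_Kn_square:
  assumes ft_cont: "continuous_on UNIV (ft W)" and supp: "\<And>u. \<bar>u\<bar> > 1 \<Longrightarrow> ft W u = 0"
    and h: "0 < h"
  shows "(LINT x|lborel. (Kn \<alpha> F W h x)\<^sup>2)
       = complex_of_real (1 / (2*pi) * (LINT t|lborel. (cmod (ft W t / ou_cf \<alpha> F (t/h)))\<^sup>2))"
proof -
  define g where "g t = ft W t / ou_cf \<alpha> F (t/h)" for t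
  define M where "M = (LINT x|lborel. \<bar>W x\<bar>) / cmod (ou_cf \<alpha> F (1/h))"
  have "continuous_on UNIV (\<lambda>t::real. t / h)"
    using h by (intro continuous_on_divide continuous_on_id continuous_on_const) auto
  then have "continuous_on UNIV (\<lambda>t. ou_cf \<alpha> F (t/h))"
    by (rule continuous_on_compose2[OF continuous_ou_cf]) simp
  then have g_cont: "continuous_on UNIV g"
    unfolding g_def by (rule continuous_on_divide[OF ft_cont]) (simp add: ou_cf_nonzero)
  have M: "0 \<le> M"
    unfolding M_def by simp
  have g_le: "cmod (g t) \<le> M" for t
  proof (cases "\<bar>t\<bar> \<le> 1")
    case True
    then have "cmod (ou_cf \<alpha> F (1/h)) \<le> cmod (ou_cf \<alpha> F (t/h))"
      using h by (intro norm_ou_cf_antimono) (auto simp: divide_right_mono abs_divide)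
    from frac_le[OF _ norm_ft_le _ this] show ?thesis
      unfolding g_def M_def norm_divide by (simp add: ou_cf_nonzero)
  qed (use supp M in \<open>simp add: g_def\<close>)
  have [measurable]: "g \<in> borel_measurable borel"
    using g_cont by (rule borel_measurable_continuous_onI)
  have g_integrable: "integrable lborel g"
  proof (rule Bochner_Integration.integrable_bound[where f="\<lambda>t. M * indicator {-1..1} t"])
    show "integrable lborel (\<lambda>t::real. M * indicator {-1..1} t)"
      by (simp add: integrable_indicator_iff)
    show "AE t in lborel. cmod (g t) \<le> norm (M * indicator {-1..1} t)"
      using g_le supp M by (auto intro!: AE_I2 simp: indicator_def g_def)
  qed simp
  have Kn_square: "(Kn \<alpha> F W h x)\<^sup>2 = complex_of_real ((1 / (2*pi))\<^sup>2 * (cmod (fourier g x))\<^sup>2)" for x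
  proof -
    have "cnj (fourier g x) = fourier g x"
    proof (rule cnj_fourier_eq_self)
      show "g (-t) = cnj (g t)" for t
        using ou_cf_uminus[of "t/h"] ft_uminus[of W t] by (simp add: g_def)
    qed
    then have "(fourier g x)\<^sup>2 = complex_of_real ((cmod (fourier g x))\<^sup>2)"
      by (rule power2_eq_of_real_norm_power2)
    then show ?thesis
      unfolding Kn_eq_fourier g_def power_mult_distrib of_real_mult of_real_power by (simp only:)
  qed
  then have "(LINT x|lborel. (Kn \<alpha> F W h x)\<^sup>2)
      = complex_of_real ((1 / (2*pi))\<^sup>2 * (LINT x|lborel. (cmod (fourier g x))\<^sup>2))"
    by (simp only: integral_complex_of_real integral_mult_right_zero)
  also have "\<dots> = complex_of_real (1 / (2*pi) * (LINT t|lborel. (cmod (g t))\<^sup>2))"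
    using plancherel[OF g_cont g_integrable g_le] by (simp add: power2_eq_square)
  finally show ?thesis unfolding g_def .
qed

lemma tendsto_scaled_integral_deconvolution:
  fixes L :: "real \<Rightarrow> real"
  assumes ft_cont: "continuous_on UNIV (ft W)" and supp: "\<And>u. \<bar>u\<bar> > 1 \<Longrightarrow> ft W u = 0"
    and L_nonneg: "\<And>x. x > 1 \<Longrightarrow> L x \<ge> 0" and L: "slowly_varying L" and B: "0 < B"
    and lim: "((\<lambda>u. \<bar>u\<bar> powr \<alpha> * cmod (ou_cf \<alpha> F u) / L \<bar>u\<bar>) \<longlongrightarrow> B) at_infinity"
  shows "((\<lambda>h. LINT t|lborel. h powr (2*\<alpha>) * (L (1/h))\<^sup>2 * (cmod (ft W t / ou_cf \<alpha> F (t/h)))\<^sup>2)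
          \<longlongrightarrow> (LINT t|lborel. \<bar>t\<bar> powr (2*\<alpha>) * (cmod (ft W t))\<^sup>2 / B\<^sup>2)) (at_right 0)"
proof -
  define s where "s y t = (L y / (y powr \<alpha> * cmod (ou_cf \<alpha> F (t*y))))\<^sup>2 * (cmod (ft W t))\<^sup>2" for y t
  have [measurable]: "ft W \<in> borel_measurable borel"
    using ft_cont by (rule borel_measurable_continuous_onI)
  have [measurable]: "ou_cf \<alpha> F \<in> borel_measurable borel"
    using continuous_ou_cf by (rule borel_measurable_continuous_onI)
  have lim_s: "((\<lambda>y. LINT t|lborel. s y t) \<longlongrightarrow> (LINT t|lborel. \<bar>t\<bar> powr (2*\<alpha>) * (cmod (ft W t))\<^sup>2 / B\<^sup>2)) at_top"
  proof (rule integral_dominated_convergence_at_top[where w="\<lambda>t. (2 / B)\<^sup>2 * (cmod (ft W t))\<^sup>2"])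
    show "integrable lborel (\<lambda>t. (2 / B)\<^sup>2 * (cmod (ft W t))\<^sup>2)"
      using integrable_norm_ft_square[OF ft_cont supp] by simp
    show "AE t in lborel. ((\<lambda>y. s y t) \<longlongrightarrow> \<bar>t\<bar> powr (2*\<alpha>) * (cmod (ft W t))\<^sup>2 / B\<^sup>2) at_top"
      using AE_lborel_singleton[of 0]
    proof eventually_elim
      case (elim t)
      have "((\<lambda>y. L y / (y powr \<alpha> * cmod (ou_cf \<alpha> F (t*y)))) \<longlongrightarrow> \<bar>t\<bar> powr \<alpha> / B) at_top"
        by (rule tendsto_slowly_varying_scaled_inverse[OF L B lim ou_cf_nonzero elim])
      then have "((\<lambda>y. s y t) \<longlongrightarrow> (\<bar>t\<bar> powr \<alpha> / B)\<^sup>2 * (cmod (ft W t))\<^sup>2) at_top"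
        unfolding s_def by (intro tendsto_mult_right tendsto_power)
      moreover have "(\<bar>t\<bar> powr \<alpha> / B)\<^sup>2 = \<bar>t\<bar> powr (2*\<alpha>) / B\<^sup>2"
        by (simp add: power_divide power2_eq_square powr_add[symmetric])
      ultimately show ?case by simp
    qed
    show "\<forall>\<^sub>F y in at_top. AE t in lborel. norm (s y t) \<le> (2 / B)\<^sup>2 * (cmod (ft W t))\<^sup>2"
      using eventually_scaled_inverse_ou_cf_le[OF L_nonneg B lim]
    proof (rule eventually_mono)
      fix y
      assume bound: "\<forall>t. \<bar>t\<bar> \<le> 1 \<longrightarrow> (L y / (y powr \<alpha> * cmod (ou_cf \<alpha> F (t*y))))\<^sup>2 \<le> (2 / B)\<^sup>2"
      have "s y t \<le> (2 / B)\<^sup>2 * (cmod (ft W t))\<^sup>2" for t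
      proof (cases "\<bar>t\<bar> \<le> 1")
        case True
        then show ?thesis
          unfolding s_def using bound by (intro mult_right_mono) simp_all
      qed (simp add: s_def supp)
      then show "AE t in lborel. norm (s y t) \<le> (2 / B)\<^sup>2 * (cmod (ft W t))\<^sup>2"
        by (simp add: s_def)
    qed
  qed (simp_all add: s_def)
  have eq: "\<forall>\<^sub>F y in at_top. (LINT t|lborel. s y t)
      = (LINT t|lborel. inverse y powr (2*\<alpha>) * (L (1 / inverse y))\<^sup>2 * (cmod (ft W t / ou_cf \<alpha> F (t / inverse y)))\<^sup>2)"
    using eventually_gt_at_top[of 0]
  proof eventually_elim
    case (elim y)
    then have "inverse y powr (2*\<alpha>) = inverse ((y powr \<alpha>)\<^sup>2)"
      by (simp add: inverse_powr power2_eq_square powr_add[symmetric])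
    then show ?case
      by (intro Bochner_Integration.integral_cong)
         (simp_all add: s_def norm_mult norm_inverse power_inverse divide_inverse power_mult_distrib mult_ac)
  qed
  show ?thesis
    unfolding filterlim_at_right_to_top using lim_s by (rule tendsto_cong[OF eq, THEN iffD1])
qed

lemma tendsto_scaled_integral_Kn_square:
  fixes L :: "real \<Rightarrow> real"
  assumes ft_cont: "continuous_on UNIV (ft W)" and supp: "\<And>u. \<bar>u\<bar> > 1 \<Longrightarrow> ft W u = 0"
    and L_nonneg: "\<And>x. x > 1 \<Longrightarrow> L x \<ge> 0" and L: "slowly_varying L" and B: "0 < B"
    and lim: "((\<lambda>u. \<bar>u\<bar> powr \<alpha> * cmod (ou_cf \<alpha> F u) / L \<bar>u\<bar>) \<longlongrightarrow> B) at_infinity"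
  shows "((\<lambda>h. complex_of_real (h powr (2 * \<alpha>) * (L (1 / h))\<^sup>2) * (LINT x|lborel. (Kn \<alpha> F W h x)\<^sup>2))
          \<longlongrightarrow> complex_of_real (1 / (2 * pi * B\<^sup>2)
                 * (LINT t|lborel. \<bar>t\<bar> powr (2 * \<alpha>) * (cmod (ft W t))\<^sup>2))) (at_right 0)"
proof -
  have eq: "\<forall>\<^sub>F h in at_right 0.
      complex_of_real (h powr (2 * \<alpha>) * (L (1 / h))\<^sup>2) * (LINT x|lborel. (Kn \<alpha> F W h x)\<^sup>2)
      = complex_of_real (1 / (2*pi)
          * (LINT t|lborel. h powr (2 * \<alpha>) * (L (1 / h))\<^sup>2 * (cmod (ft W t / ou_cf \<alpha> F (t/h)))\<^sup>2))"
    using eventually_at_right_less[of 0]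
  proof (rule eventually_mono)
    fix h :: real
    assume h: "0 < h"
    have "(LINT t|lborel. h powr (2 * \<alpha>) * (L (1 / h))\<^sup>2 * (cmod (ft W t / ou_cf \<alpha> F (t/h)))\<^sup>2)
        = h powr (2 * \<alpha>) * (L (1 / h))\<^sup>2 * (LINT t|lborel. (cmod (ft W t / ou_cf \<alpha> F (t/h)))\<^sup>2)"
      by (rule integral_mult_right_zero)
    then show "complex_of_real (h powr (2 * \<alpha>) * (L (1 / h))\<^sup>2) * (LINT x|lborel. (Kn \<alpha> F W h x)\<^sup>2)
      = complex_of_real (1 / (2*pi)
          * (LINT t|lborel. h powr (2 * \<alpha>) * (L (1 / h))\<^sup>2 * (cmod (ft W t / ou_cf \<alpha> F (t/h)))\<^sup>2))"
      by (simp only: integral_Kn_square[OF ft_cont supp h] of_real_mult mult_ac)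
  qed
  have scaled_lim: "((\<lambda>h. complex_of_real (1 / (2*pi)
          * (LINT t|lborel. h powr (2 * \<alpha>) * (L (1 / h))\<^sup>2 * (cmod (ft W t / ou_cf \<alpha> F (t/h)))\<^sup>2)))
       \<longlongrightarrow> complex_of_real (1 / (2*pi) * (LINT t|lborel. \<bar>t\<bar> powr (2*\<alpha>) * (cmod (ft W t))\<^sup>2 / B\<^sup>2)))
      (at_right 0)"
    by (rule tendsto_of_real[OF tendsto_mult_left[OF
          tendsto_scaled_integral_deconvolution[OF ft_cont supp L_nonneg L B lim]]])
  have "1 / (2*pi) * (LINT t|lborel. \<bar>t\<bar> powr (2*\<alpha>) * (cmod (ft W t))\<^sup>2 / B\<^sup>2)
      = 1 / (2 * pi * B\<^sup>2) * (LINT t|lborel. \<bar>t\<bar> powr (2 * \<alpha>) * (cmod (ft W t))\<^sup>2)"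
    by simp
  with scaled_lim show ?thesis
    by (simp only: tendsto_cong[OF eq])
qed

end

theorem lemmaL55:
  fixes \<alpha> :: real and F :: "real measure" and W :: "real \<Rightarrow> real" and p :: nat
    and L :: "real \<Rightarrow> real" and B :: real
    and dk ddk w1 w2 w3 :: "real \<Rightarrow> complex"
  assumes F_prob: "prob_space F" and F_sets: "sets F = sets borel"
    and F_pos: "measure F {..0} = 0"
    \<comment> \<open>(i)\<close>
    and cond_i: "\<exists>\<epsilon>>0. set_integrable lborel {0<..}
                   (\<lambda>x. max 1 (\<bar>x\<bar> powr (2 + \<epsilon>)) * kfun \<alpha> F x)"
    \<comment> \<open>(ii)\<close>
    and cond_ii: "kfun \<alpha> F 0 = \<alpha>" "2 < \<alpha>"
    \<comment> \<open>(iv)\<close>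
    and dk: "\<And>u. (phik \<alpha> F has_vector_derivative dk u) (at u)"
    and ddk: "\<And>u. (dk has_vector_derivative ddk u) (at u)"
    and cond_iv: "\<exists>C. \<forall>u. cmod (phik \<alpha> F u) \<le> C / (1 + \<bar>u\<bar>)
                        \<and> cmod (dk u) \<le> C / (1 + \<bar>u\<bar>)\<^sup>2
                        \<and> cmod (ddk u) \<le> C / (1 + \<bar>u\<bar>)\<^sup>2"
    \<comment> \<open>(v)\<close>
    and W_int: "integrable lborel W" and W_one: "(LINT x|lborel. W x) = 1"
    and W_mom: "integrable lborel (\<lambda>x. \<bar>x\<bar> ^ (p + 1) * \<bar>W x\<bar>)"
    and W_van: "\<And>l. 1 \<le> l \<Longrightarrow> l \<le> p \<Longrightarrow> (LINT x|lborel. x ^ l * W x) = 0"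
    and W_supp: "\<And>u. \<bar>u\<bar> > 1 \<Longrightarrow> ft W u = 0"
    and w1: "\<And>u. (ft W has_vector_derivative w1 u) (at u)"
    and w2: "\<And>u. (w1 has_vector_derivative w2 u) (at u)"
    and w3: "\<And>u. (w2 has_vector_derivative w3 u) (at u)"
    and w3_cont: "continuous_on UNIV w3"
    \<comment> \<open>slowly varying factor\<close>
    and L_nonneg: "\<And>x. x > 1 \<Longrightarrow> L x \<ge> 0"
    and L_sv: "slowly_varying L"
    and B_pos: "B > 0"
    and L_B: "((\<lambda>t. \<bar>t\<bar> powr \<alpha> * cmod (ou_cf \<alpha> F t) / L \<bar>t\<bar>) \<longlongrightarrow> B) at_infinity"
  shows "((\<lambda>h. complex_of_real (h powr (2 * \<alpha>) * (L (1 / h))\<^sup>2)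
              * (LINT x|lborel. (Kn \<alpha> F W h x)\<^sup>2))
          \<longlongrightarrow> complex_of_real (1 / (2 * pi * B\<^sup>2)
                 * (LINT t|lborel. \<bar>t\<bar> powr (2 * \<alpha>) * (cmod (ft W t))\<^sup>2))) (at_right 0)"
proof -
  have pos: "0 < \<alpha>"
    using cond_ii(2) by simp
  from cond_i obtain \<epsilon>
    where weighted: "set_integrable lborel {0<..} (\<lambda>x. max 1 (\<bar>x\<bar> powr (2 + \<epsilon>)) * kfun \<alpha> F x)"
    by blast
  interpret levy_tail \<alpha> F
    using F_prob F_sets pos set_integrable_kfun[OF F_prob F_sets pos weighted] by (rule levy_tail.intro)
  have ft_cont: "continuous_on UNIV (ft W)"
    using w1 by (intro continuous_at_imp_continuous_on ballI has_vector_derivative_continuous)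
  show ?thesis
    by (rule tendsto_scaled_integral_Kn_square[OF ft_cont W_supp L_nonneg L_sv B_pos L_B])
qed

end
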